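(* Any PUT operation $O$ by client $c$ writing key $k$ of partition $p$ at time $t$ with dependency timestamp $dt = dt_w$ satisfies per-key monotonic-write consistency: for every server $s$ and every time $t'$ such that $CommittedWrites(s,k,t')$ includes $O$, no client accessing $s$ (at or after $t'$) reads a value of $k$ written by a write $w\neq O$ with $w\in ClientWrites(c,k,t)$.
   Context: System model. Data is replicated in $D$ datacenters and split into $P$ partitions. In each datacenter $d$, each partition is replicated by a Raft group with a leader $L_d$; Raft guarantees that all members of a group commit the same totally ordered sequence of log entries, each with a log index, in increasing index order. Every version $v$ of a key carries a value, an originating datacenter $v.dc\_id$, the log index $idx(v)$ it received in the Raft log of its originating datacenter, and a hybrid logical clock (HLC) timestamp $v.t=\langle l,c\rangle$; HLC timestamps are compared lexicographically. Writes committed in the group of datacenter $d$ that originated at $d$ are forwarded, in commit order, over FIFO channels to the leaders of the same partition in every other datacenter, which append them (carrying their original index $idx(v)$) to their own Raft logs. Each server $s$ keeps a vector $sv$ of length $D$, initially zero; when $s$ commits a version $v$ it sets $sv[v.dc\_id]:=idx(v)$ and adds $v$ to the version chain of its key. Client protocol. Each client $c$ keeps $D\times P$ matrices $hrm$ (highest read) and $hwm$ (highest write), initially zero, and HLC timestamps $dt_r,dt_w$, initially zero. GET of key $k$ in partition $p$: the client sends vectors $hrv,hwv$ of length $D$ (each either the zero vector or $hrm[:,p]$, resp. $hwm[:,p]$); the server blocks while there is $i$ with $sv[i]<hrv[i]$ or $sv[i]<hwv[i]$; it then returns the version $v$ of $k$ in its version chain with the largest timestamp, together with $v.dc\_id$,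 $sv[v.dc\_id]$ and $v.t$; the client sets $hrm[v.dc\_id,p]:=\max(hrm[v.dc\_id,p],sv[v.dc\_id])$ and $dt_r:=\max(dt_r,v.t)$. PUT of key $k$ in partition $p$ at leader $L_d$: the client sends a dependency timestamp $dt$ (one of $0$, $dt_r$, $dt_w$, $\max(dt_r,dt_w)$); the leader updates its HLC $\langle l,c\rangle$ with $dt$ by the rule: $l':=l$; $l:=\max(l',pt,dt.l)$ where $pt$ is its physical clock; then $c:=\max(c,dt.c)+1$ if $l=l'=dt.l$, else $c:=c+1$ if $l=l'$, else $c:=dt.c+1$ if $l=dt.l$, else $c:=0$; it timestamps the new version with the updated HLC value $t$ and $dc\_id=d$, appends it to the Raft log, and after commit replies with $d$, $sv[d]$ and $t$; the client sets $hwm[d,p]:=\max(hwm[d,p],sv[d])$ and $dt_w:=\max(dt_w,t)$. Definitions. $CommittedWrites(s,k,t)$ is the ordered sequence of all writes of key $k$ committed at server $s$ by time $t$; $ClientWrites(c,k,t)$ is the ordered sequence of all writes of $k$ done by client $c$ by time $t$; $ClientReads(c,k,t)$ is the set of writes whose value of $k$ has been read by client $c$ by time $t$. *)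

theory Defs
  imports Main "HOL-Library.Product_Lexorder"
begin

text \<open>HLC timestamps are pairs (l, c), compared lexicographically
  (the order on pairs from Product_Lexorder).  Datacenters and partitions are
  natural numbers below D resp. P.\<close>

type_synonym hlc = "nat \<times> nat"

record ('k, 'v) version =
  vkey :: 'k
  vval :: 'v
  vdc  :: nat      \<comment> \<open>originating datacenter\<close>
  vidx :: nat      \<comment> \<open>log index in the Raft log of the originating datacenter\<close>
  vts  :: hlc

record ('srv, 'k) config =
  nD :: nat
  nP :: nat
  sdc :: "'srv \<Rightarrow> nat"
  spart :: "'srv \<Rightarrow> nat"
  leader :: "nat \<Rightarrow> nat \<Rightarrow> 'srv"  \<comment> \<open>leader of the Raft group of partition p in datacenter d\<close>
  kpart :: "'k \<Rightarrow> nat"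

definition wf_config :: "('srv, 'k) config \<Rightarrow> bool" where
  "wf_config cfg \<longleftrightarrow>
     (\<forall>d < nD cfg. \<forall>p < nP cfg. sdc cfg (leader cfg d p) = d \<and> spart cfg (leader cfg d p) = p)
   \<and> (\<forall>k. kpart cfg k < nP cfg)"

definition is_server :: "('srv, 'k) config \<Rightarrow> 'srv \<Rightarrow> bool" where
  "is_server cfg s \<longleftrightarrow> sdc cfg s < nD cfg \<and> spart cfg s < nP cfg"

text \<open>Choice of the dependency timestamp sent with a PUT.\<close>
datatype dsel = DepZero | DepR | DepW | DepRW

text \<open>The Raft group of (d,p) is abstracted by its totally ordered
  log glog d p (entries carry their idx); server s has committed exactly the
  first ccnt s entries of the log of its group (Raft: all members commit the
  same sequence, in index order).\<close>
record ('c, 'srv, 'k, 'v) sysstate =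
  glog :: "nat \<Rightarrow> nat \<Rightarrow> ('k, 'v) version list"
  ccnt :: "'srv \<Rightarrow> nat"
  shlc :: "'srv \<Rightarrow> hlc"
  chan :: "nat \<Rightarrow> nat \<Rightarrow> nat \<Rightarrow> ('k, 'v) version list"  \<comment> \<open>FIFO channel from d to d' for partition p\<close>
  hrm :: "'c \<Rightarrow> nat \<Rightarrow> nat \<Rightarrow> nat"
  hwm :: "'c \<Rightarrow> nat \<Rightarrow> nat \<Rightarrow> nat"
  dtr :: "'c \<Rightarrow> hlc"
  dtw :: "'c \<Rightarrow> hlc"
  pend :: "'c \<Rightarrow> ('srv \<times> ('k, 'v) version) option"  \<comment> \<open>outstanding PUT (leader, version)\<close>
  whist :: "'c \<Rightarrow> (('k, 'v) version \<times> dsel) list"   \<comment> \<open>PUTs issued by the client\<close>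

definition init_state :: "('c, 'srv, 'k, 'v) sysstate" where
  "init_state = \<lparr> glog = (\<lambda>d p. []), ccnt = (\<lambda>s. 0), shlc = (\<lambda>s. (0, 0)),
     chan = (\<lambda>d d' p. []), hrm = (\<lambda>c d p. 0), hwm = (\<lambda>c d p. 0),
     dtr = (\<lambda>c. (0, 0)), dtw = (\<lambda>c. (0, 0)), pend = (\<lambda>c. None), whist = (\<lambda>c. []) \<rparr>"

definition committed :: "('srv, 'k) config \<Rightarrow> ('c, 'srv, 'k, 'v) sysstate \<Rightarrow> 'srv \<Rightarrow> ('k, 'v) version list" where
  "committed cfg st s = take (ccnt st s) (glog st (sdc cfg s) (spart cfg s))"

definition sv :: "('srv, 'k) config \<Rightarrow> ('c, 'srv, 'k, 'v) sysstate \<Rightarrow> 'srv \<Rightarrow> nat \<Rightarrow> nat" where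
  "sv cfg st s i = (case filter (\<lambda>v. vdc v = i) (committed cfg st s) of
                      [] \<Rightarrow> 0 | xs \<Rightarrow> vidx (last xs))"

text \<open>CommittedWrites(s,k,t), evaluated at the state at time t.\<close>
definition CommittedWrites :: "('srv, 'k) config \<Rightarrow> ('c, 'srv, 'k, 'v) sysstate \<Rightarrow> 'srv \<Rightarrow> 'k \<Rightarrow> ('k, 'v) version list" where
  "CommittedWrites cfg st s k = filter (\<lambda>v. vkey v = k) (committed cfg st s)"

text \<open>ClientWrites(c,k,t), evaluated at the state at time t.\<close>
definition ClientWrites :: "('c, 'srv, 'k, 'v) sysstate \<Rightarrow> 'c \<Rightarrow> 'k \<Rightarrow> ('k, 'v) version list" where
  "ClientWrites st c k = filter (\<lambda>v. vkey v = k) (map fst (whist st c))"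

definition hlc_update :: "hlc \<Rightarrow> nat \<Rightarrow> hlc \<Rightarrow> hlc" where
  "hlc_update lc pt dt =
    (let l' = fst lc; c = snd lc; l = max (max l' pt) (fst dt)
     in (l, if l = l' \<and> l' = fst dt then max c (snd dt) + 1
            else if l = l' then c + 1
            else if l = fst dt then snd dt + 1
            else 0))"

definition depval :: "('c, 'srv, 'k, 'v) sysstate \<Rightarrow> 'c \<Rightarrow> dsel \<Rightarrow> hlc" where
  "depval st c sel = (case sel of DepZero \<Rightarrow> (0, 0) | DepR \<Rightarrow> dtr st c | DepW \<Rightarrow> dtw st c
                        | DepRW \<Rightarrow> max (dtr st c) (dtw st c))"

datatype ('c, 'srv, 'k, 'v) label =
    Get 'c 'srv 'k bool bool "('k, 'v) version"
      \<comment> \<open>client, server, key, send hrm[:,p] (else 0), send hwm[:,p] (else 0), returned version\<close>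
  | Put 'c nat 'k 'v dsel nat
      \<comment> \<open>client, datacenter d of the leader L_d, key, value, dependency choice, physical clock of leader\<close>
  | Reply 'c            \<comment> \<open>leader's reply to the client's outstanding PUT\<close>
  | Commit 'srv
  | Fwd nat nat nat     \<comment> \<open>leader of (d',p) receives head of FIFO channel from d\<close>
  | Idle

definition step :: "('srv, 'k) config \<Rightarrow> ('c, 'srv, 'k, 'v) sysstate \<Rightarrow> ('c, 'srv, 'k, 'v) label
                    \<Rightarrow> ('c, 'srv, 'k, 'v) sysstate \<Rightarrow> bool" where
  "step cfg st lb st' = (case lb of
     Get c s k ur uw v \<Rightarrow>
       (let p = kpart cfg k;
            hrv = (\<lambda>i. if ur then hrm st c i p else 0);
            hwv = (\<lambda>i. if uw then hwm st c i p else 0)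
        in pend st c = None \<and> is_server cfg s \<and> spart cfg s = p
         \<and> (\<forall>i < nD cfg. hrv i \<le> sv cfg st s i \<and> hwv i \<le> sv cfg st s i)
         \<and> v \<in> set (CommittedWrites cfg st s k)
         \<and> (\<forall>u \<in> set (CommittedWrites cfg st s k). vts u \<le> vts v)
         \<and> st' = st \<lparr> hrm := (hrm st)(c := (hrm st c)(vdc v := (hrm st c (vdc v))(p :=
                          max (hrm st c (vdc v) p) (sv cfg st s (vdc v))))),
                     dtr := (dtr st)(c := max (dtr st c) (vts v)) \<rparr>)
   | Put c d k x sel pt \<Rightarrow>
       (let p = kpart cfg k; L = leader cfg d p;
            t = hlc_update (shlc st L) pt (depval st c sel);
            v = \<lparr> vkey = k, vval = x, vdc = d, vidx = length (glog st d p) + 1, vts = t \<rparr>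
        in pend st c = None \<and> d < nD cfg
         \<and> st' = st \<lparr> glog := (glog st)(d := (glog st d)(p := glog st d p @ [v])),
                     shlc := (shlc st)(L := t),
                     pend := (pend st)(c := Some (L, v)),
                     whist := (whist st)(c := whist st c @ [(v, sel)]) \<rparr>)
   | Reply c \<Rightarrow>
       (\<exists>L v. pend st c = Some (L, v) \<and> v \<in> set (committed cfg st L)
         \<and> (let d = vdc v; p = kpart cfg (vkey v) in
            st' = st \<lparr> hwm := (hwm st)(c := (hwm st c)(d := (hwm st c d)(p :=
                          max (hwm st c d p) (sv cfg st L d)))),
                      dtw := (dtw st)(c := max (dtw st c) (vts v)),
                      pend := (pend st)(c := None) \<rparr>))
   | Commit s \<Rightarrow>
       (let d = sdc cfg s; p = spart cfg s; n = ccnt st s in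
        is_server cfg s \<and> n < length (glog st d p)
        \<and> (let v = glog st d p ! n;
               fwd = (s = leader cfg d p \<and> vdc v = d)
           in st' = st \<lparr> ccnt := (ccnt st)(s := Suc n),
                        chan := (\<lambda>d1 d2 p2. if fwd \<and> d1 = d \<and> p2 = p \<and> d2 < nD cfg \<and> d2 \<noteq> d
                                            then chan st d1 d2 p2 @ [v] else chan st d1 d2 p2) \<rparr>))
   | Fwd d d' p \<Rightarrow>
       (chan st d d' p \<noteq> []
        \<and> st' = st \<lparr> glog := (glog st)(d' := (glog st d')(p := glog st d' p @ [hd (chan st d d' p)])),
                    chan := (chan st)(d := (chan st d)(d' := (chan st d d')(p := tl (chan st d d' p)))) \<rparr>)
   | Idle \<Rightarrow> st' = st)"

text \<open>An execution: ex n is the state at time n, lb n the event between times n and n+1.\<close>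
definition execution :: "('srv, 'k) config \<Rightarrow> (nat \<Rightarrow> ('c, 'srv, 'k, 'v) sysstate)
                         \<Rightarrow> (nat \<Rightarrow> ('c, 'srv, 'k, 'v) label) \<Rightarrow> bool" where
  "execution cfg ex lb \<longleftrightarrow> ex 0 = init_state \<and> (\<forall>n. step cfg (ex n) (lb n) (ex (Suc n)))"

end

theory Submission
  imports Defs
begin

text \<open>Since the client has no outstanding PUT when it issues O, every earlier write of
  the client has been acknowledged, so its timestamp is at most dt_w.  The HLC update
  makes the timestamp of O strictly larger than dt_w.  Once O is committed at s it stays
  committed, and a GET at s returns the committed version of k with the largest
  timestamp, which is therefore later than every earlier write of the client.\<close>

lemma hlc_update_gt: "dt < hlc_update lc pt dt"
proof (cases dt, cases lc)
  fix a b l c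
  assume dt: "dt = (a, b)" and lc: "lc = (l, c)"
  define l_new where "l_new = max (max l pt) a"
  have fst_eq: "fst (hlc_update lc pt dt) = l_new"
    unfolding hlc_update_def dt lc Let_def l_new_def by simp
  have snd_gt: "b < snd (hlc_update lc pt dt)" if "l_new = a"
  proof -
    have "snd (hlc_update lc pt dt) = (if a = l then max c b + 1 else b + 1)"
      using that unfolding hlc_update_def dt lc Let_def l_new_def by simp
    then show ?thesis by (simp add: less_Suc_eq_le)
  qed
  have "a \<le> l_new" unfolding l_new_def by simp
  with fst_eq snd_gt show ?thesis
    unfolding less_prod_def' dt by auto
qed

lemma execution_step:
  "execution cfg ex lb \<Longrightarrow> step cfg (ex n) (lb n) (ex (Suc n))"
  by (simp add: execution_def)

lemma execution_invariant:
  assumes "execution cfg ex lb"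
    and "I init_state"
    and "\<And>st l st'. step cfg st l st' \<Longrightarrow> I st \<Longrightarrow> I st'"
  shows "I (ex n)"
  by (induction n) (use assms in \<open>auto simp: execution_def\<close>)

lemma committed_step_subset:
  assumes "step cfg st l st'"
  shows "set (committed cfg st s) \<subseteq> set (committed cfg st' s)"
proof (cases l)
  case (Commit s')
  with assms have "glog st' = glog st" and "ccnt st' = (ccnt st)(s' := Suc (ccnt st s'))"
    by (auto simp: step_def Let_def)
  then show ?thesis
    by (cases "s' = s") (simp_all add: committed_def set_take_subset_set_take)
qed (use assms in \<open>auto simp: step_def Let_def committed_def\<close>)

lemma committed_mono:
  assumes "execution cfg ex lb" and "n \<le> m"
  shows "set (committed cfg (ex n) s) \<subseteq> set (committed cfg (ex m) s)"
  using assms(2)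
proof (induction m rule: dec_induct)
  case (step m)
  then show ?case
    using committed_step_subset[OF execution_step[OF assms(1)]] by blast
qed simp

definition writes_acknowledged :: "('c, 'srv, 'k, 'v) sysstate \<Rightarrow> 'c \<Rightarrow> bool" where
  "writes_acknowledged st c \<longleftrightarrow>
     (\<forall>u \<in> fst ` set (whist st c). vts u \<le> dtw st c \<or> (\<exists>L. pend st c = Some (L, u)))"

lemma writes_acknowledged_step:
  assumes "step cfg st l st'" and "writes_acknowledged st c"
  shows "writes_acknowledged st' c"
proof (cases l)
  case (Reply a)
  with assms(1) obtain L v where "pend st a = Some (L, v)"
    and "whist st' = whist st" and "dtw st' = (dtw st)(a := max (dtw st a) (vts v))"
    and "pend st' = (pend st)(a := None)"
    by (auto simp: step_def Let_def)
  with assms(2) show ?thesis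
    by (fastforce simp: writes_acknowledged_def le_max_iff_disj)
qed (use assms in \<open>auto simp: step_def Let_def writes_acknowledged_def\<close>)

lemma writes_acknowledged_execution:
  "execution cfg ex lb \<Longrightarrow> writes_acknowledged (ex n) c"
  by (erule execution_invariant[where I = "\<lambda>st. writes_acknowledged st c"])
     (simp add: init_state_def writes_acknowledged_def, erule writes_acknowledged_step)

lemma put_dtw_timestamp:
  assumes "step cfg st (Put c d k x DepW pt) st'"
    and "whist st' c = whist st c @ [(wO, DepW)]"
  shows "pend st c = None"
    and "vts wO = hlc_update (shlc st (leader cfg d (kpart cfg k))) pt (dtw st c)"
  using assms by (auto simp: step_def Let_def depval_def)

lemma get_returns_latest:
  assumes "step cfg st (Get c s k ur uw v) st'"
    and "u \<in> set (CommittedWrites cfg st s k)"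
  shows "vts u \<le> vts v"
  using assms by (auto simp: step_def Let_def)

theorem mainTheorem4:
  fixes cfg :: "('srv, 'k) config"
    and ex :: "nat \<Rightarrow> ('c, 'srv, 'k, 'v) sysstate"
    and lb :: "nat \<Rightarrow> ('c, 'srv, 'k, 'v) label"
  assumes "wf_config cfg"
    and "execution cfg ex lb"
    and "lb t = Put c d k x DepW pt"
    and "whist (ex (Suc t)) c = whist (ex t) c @ [(wO, DepW)]"
    and "w \<in> set (ClientWrites (ex (Suc t)) c k)"
    and "w \<noteq> wO"
    and "wO \<in> set (CommittedWrites cfg (ex t') s k)"
    and "t' \<le> t''"
    and "lb t'' = Get c' s k ur uw v"
  shows "v \<noteq> w"
proof -
  note put = put_dtw_timestamp[OF execution_step[OF assms(2), of t, unfolded assms(3)] assms(4)]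
  have "w \<in> set (map fst (whist (ex (Suc t)) c))"
    using assms(5) unfolding ClientWrites_def by simp
  then have "w \<in> fst ` set (whist (ex t) c @ [(wO, DepW)])"
    unfolding assms(4) by simp
  then have "w \<in> fst ` set (whist (ex t) c)"
    using assms(6) by auto
  then have "vts w \<le> dtw (ex t) c"
    using writes_acknowledged_execution[OF assms(2), of t c] put(1)
    by (auto simp: writes_acknowledged_def)
  also have "\<dots> < vts wO"
    unfolding put(2) by (rule hlc_update_gt)
  also have "vts wO \<le> vts v"
  proof (rule get_returns_latest)
    show "step cfg (ex t'') (Get c' s k ur uw v) (ex (Suc t''))"
      using execution_step[OF assms(2), of t''] assms(9) by simp
    show "wO \<in> set (CommittedWrites cfg (ex t'') s k)"
      using assms(7) committed_mono[OF assms(2,8)] by (auto simp: CommittedWrites_def)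
  qed
  finally show ?thesis by auto
qed

end
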